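(* In the setting below, suppose the Borel sets $A_i$ exist as in the standing assumption and let $\pi(d\theta\mid a)$ be a Markov kernel satisfying the disintegration $\nu(d\theta)=\pi(d\theta\mid a)s(da)$. Define the Markov kernel $\tilde Q_0$ on $\mathcal{B}_1\times\mathcal{X}$ by $\tilde Q_0(A\mid x)=Q(t^{-1}(A)\mid x)$. Then $\tilde Q_0$ is a version of the formal posterior for the model $\tilde P$ and prior $s$, i.e. $\tilde P(dx\mid a)s(da)=\tilde Q_0(da\mid x)M(dx)$ as joint measures on $\mathcal{X}\times[0,\infty)$.
   Context: $(\mathcal{X},\mathcal{B})$ and $(\Theta,\mathcal{C})$ are Polish spaces with Borel $\sigma$-algebras; $\{P(\cdot\mid\theta)\}$ is a Markov kernel on $\mathcal{B}\times\Theta$; $\nu$ is a $\sigma$-finite measure on $\Theta$; the marginal $M(B)=\int P(B\mid\theta)\nu(d\theta)$ is assumed $\sigma$-finite; $Q(d\theta\mid x)$ is a Markov kernel with $P(dx\mid\theta)\nu(d\theta)=Q(d\theta\mid x)M(dx)$ as joint measures. Let $t:\Theta\to[0,\infty)$ be measurable, $\mathcal{B}_1$ the Borel sets of $[0,\infty)$, and $s(A)=\nu(t^{-1}(A))$. Standing assumption: there are disjoint Borel sets $A_1,A_2,\dots$ with $\bigcup_i A_i=[0,\infty)$ and $0<\nu(t^{-1}(A_i))<\infty$ for each $i$. The disintegration $\nu(d\theta)=\pi(d\theta\mid a)s(da)$ means $\int_\Theta f_2(t(\theta))f_1(\theta)\nu(d\theta)=\int_0^\infty f_2(a)\left(\int_\Theta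 f_1(\theta)\pi(d\theta\mid a)\right)s(da)$ for all nonnegative measurable $f_1$ on $\Theta$ and $f_2$ on $[0,\infty)$. The new model is $\tilde P(dx\mid a)=\int_\Theta P(dx\mid\theta)\pi(d\theta\mid a)$. *)

theory Defs
  imports "HOL-Probability.Probability"
begin

definition halfline :: "real measure" where
  "halfline = restrict_space borel {0..}"

definition joint_prior :: "('a \<Rightarrow> 'b measure) \<Rightarrow> 'a measure \<Rightarrow> 'b measure \<Rightarrow> ('b \<times> 'a) measure" where
  "joint_prior K mu Nb = measure_of (space Nb \<times> space mu) (sets (Nb \<Otimes>\<^sub>M mu))
     (\<lambda>S. \<integral>\<^sup>+ a. emeasure (K a) {b \<in> space Nb. (b, a) \<in> S} \<partial>mu)"

definition joint_post :: "('b \<Rightarrow> 'a measure) \<Rightarrow> 'b measure \<Rightarrow> 'a measure \<Rightarrow> ('b \<times> 'a) measure" where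
  "joint_post Q M Na = measure_of (space M \<times> space Na) (sets (M \<Otimes>\<^sub>M Na))
     (\<lambda>S. \<integral>\<^sup>+ x. emeasure (Q x) {a \<in> space Na. (x, a) \<in> S} \<partial>M)"

definition marginal :: "('t \<Rightarrow> 'x::topological_space measure) \<Rightarrow> 't measure \<Rightarrow> 'x measure" where
  "marginal P nu = measure_of UNIV (sets borel) (\<lambda>B. \<integral>\<^sup>+ \<theta>. emeasure (P \<theta>) B \<partial>nu)"

definition mix_kernel :: "('t \<Rightarrow> 'x::topological_space measure) \<Rightarrow> ('a \<Rightarrow> 't measure) \<Rightarrow> 'a \<Rightarrow> 'x measure" where
  "mix_kernel P K a = measure_of UNIV (sets borel) (\<lambda>B. \<integral>\<^sup>+ \<theta>. emeasure (P \<theta>) B \<partial>(K a))"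

end

theory Submission
  imports Defs
begin

text \<open>Both joint measures are images of the original ones under \<open>(x, \<theta>) \<mapsto> (x, t \<theta>)\<close>.
  On the posterior side this is just the pushforward of \<open>Q(\<cdot>|x)\<close> under \<open>t\<close>. On the prior side, a
  rectangle \<open>B \<times> C\<close> gets mass \<open>\<integral>\<^sub>C \<integral> P(B|\<theta>) \<pi>(d\<theta>|a) s(da)\<close>, which the disintegration turns
  into \<open>\<integral> 1\<^sub>C(t \<theta>) P(B|\<theta>) \<nu>(d\<theta>)\<close>, the mass of \<open>B \<times> t\<^sup>-\<^sup>1(C)\<close> under \<open>P(dx|\<theta>)\<nu>(d\<theta>)\<close>; the
  rectangles \<open>\<X> \<times> A\<^sub>i\<close> have finite mass and cover the space, so rectangles determine the measure.
  Since \<open>Q\<close> is a posterior the two original joint measures coincide, hence so do their images.\<close>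

lemma space_halfline: "space halfline = {0..}"
  unfolding halfline_def by (simp add: space_restrict_space)

lemma sets_halfline_iff: "C \<in> sets halfline \<longleftrightarrow> C \<in> sets borel \<and> C \<subseteq> {0..}"
  unfolding halfline_def by (auto simp: sets_restrict_space_iff)

lemma measurable_halfline:
  assumes "t \<in> borel_measurable M" and "\<And>x. x \<in> space M \<Longrightarrow> 0 \<le> t x"
  shows "t \<in> measurable M halfline"
  unfolding halfline_def using assms by (intro measurable_restrict_space2) auto

lemma sets_marginal: "sets (marginal P nu) = sets borel"
  unfolding marginal_def using sets.sigma_sets_eq[of borel]
  by (simp add: sets_measure_of_conv del: sets.sigma_sets_eq)

lemma sets_joint_prior: "sets (joint_prior K mu Nb) = sets (Nb \<Otimes>\<^sub>M mu)"
  unfolding joint_prior_def space_pair_measure[symmetric] by simp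

lemma sets_joint_post: "sets (joint_post K mu Na) = sets (mu \<Otimes>\<^sub>M Na)"
  unfolding joint_post_def space_pair_measure[symmetric] by simp

lemma space_joint_prior: "space (joint_prior K mu Nb) = space Nb \<times> space mu"
  using sets_eq_imp_space_eq[OF sets_joint_prior] by (simp add: space_pair_measure)

lemma space_joint_post: "space (joint_post K mu Na) = space mu \<times> space Na"
  using sets_eq_imp_space_eq[OF sets_joint_post] by (simp add: space_pair_measure)

lemma measure_of_eq_bind:
  assumes F: "F \<in> measurable mu (subprob_algebra N)" and ne: "space mu \<noteq> {}"
    and f: "\<And>S. S \<in> sets N \<Longrightarrow> f S = (\<integral>\<^sup>+a. emeasure (F a) S \<partial>mu)"
  shows "measure_of (space N) (sets N) f = mu \<bind> F"
proof -
  have sets_bind: "sets (mu \<bind> F) = sets N"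
    using sets_bind[OF sets_kernel[OF F] ne] .
  have "measure_of (space N) (sets N) f = measure_of (space N) (sets N) (emeasure (mu \<bind> F))"
    by (rule measure_of_eq[OF sets.space_closed])
       (simp add: f emeasure_bind[OF ne F] sets.sigma_sets_eq)
  also have "\<dots> = mu \<bind> F"
    using sets_bind sets_eq_imp_space_eq[OF sets_bind] by (metis measure_of_of_measure)
  finally show ?thesis .
qed

lemma emeasure_distr_Pair_left:
  assumes M: "sets M = sets N" and y: "y \<in> space L" and S: "S \<in> sets (N \<Otimes>\<^sub>M L)"
  shows "emeasure (distr M (N \<Otimes>\<^sub>M L) (\<lambda>x. (x, y))) S = emeasure M {x \<in> space N. (x, y) \<in> S}"
proof -
  have "(\<lambda>x. (x, y)) \<in> measurable M (N \<Otimes>\<^sub>M L)"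
    unfolding measurable_cong_sets[OF M refl] using y by measurable
  then show ?thesis
    using S sets_eq_imp_space_eq[OF M] by (simp add: emeasure_distr vimage_def Int_def conj_commute)
qed

lemma emeasure_distr_Pair_right:
  assumes M: "sets M = sets N" and x: "x \<in> space L" and S: "S \<in> sets (L \<Otimes>\<^sub>M N)"
  shows "emeasure (distr M (L \<Otimes>\<^sub>M N) (Pair x)) S = emeasure M {y \<in> space N. (x, y) \<in> S}"
proof -
  have "Pair x \<in> measurable M (L \<Otimes>\<^sub>M N)"
    unfolding measurable_cong_sets[OF M refl] using x by measurable
  then show ?thesis
    using S sets_eq_imp_space_eq[OF M] by (simp add: emeasure_distr vimage_def Int_def conj_commute)
qed

lemma measurable_distr_Pair_left:
  assumes K: "K \<in> measurable mu (subprob_algebra Nb)"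
  shows "(\<lambda>a. distr (K a) (Nb \<Otimes>\<^sub>M mu) (\<lambda>b. (b, a))) \<in> measurable mu (subprob_algebra (Nb \<Otimes>\<^sub>M mu))"
  by (rule measurable_distr2[OF _ K]) measurable

lemma measurable_distr_Pair_right:
  assumes K: "K \<in> measurable mu (subprob_algebra Na)"
  shows "(\<lambda>x. distr (K x) (mu \<Otimes>\<^sub>M Na) (Pair x)) \<in> measurable mu (subprob_algebra (mu \<Otimes>\<^sub>M Na))"
  by (rule measurable_distr2[OF _ K]) measurable

text \<open>Writing the joint measures as a bind is what shows that the \<^const>\<open>measure_of\<close> in their
  definitions is countably additive.\<close>

lemma joint_prior_eq_bind:
  assumes K: "K \<in> measurable mu (subprob_algebra Nb)" and ne: "space mu \<noteq> {}"
  shows "joint_prior K mu Nb = mu \<bind> (\<lambda>a. distr (K a) (Nb \<Otimes>\<^sub>M mu) (\<lambda>b. (b, a)))"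
  unfolding joint_prior_def space_pair_measure[symmetric]
  using sets_kernel[OF K]
  by (intro measure_of_eq_bind[OF measurable_distr_Pair_left[OF K] ne])
     (simp add: emeasure_distr_Pair_left cong: nn_integral_cong)

lemma emeasure_joint_prior:
  assumes K: "K \<in> measurable mu (subprob_algebra Nb)" and ne: "space mu \<noteq> {}"
    and S: "S \<in> sets (Nb \<Otimes>\<^sub>M mu)"
  shows "emeasure (joint_prior K mu Nb) S = (\<integral>\<^sup>+a. emeasure (K a) {b \<in> space Nb. (b, a) \<in> S} \<partial>mu)"
  using S sets_kernel[OF K]
  by (simp add: joint_prior_eq_bind[OF K ne] emeasure_bind[OF ne measurable_distr_Pair_left[OF K]]
      emeasure_distr_Pair_left cong: nn_integral_cong)

lemma emeasure_joint_prior_times: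
  assumes K: "K \<in> measurable mu (subprob_algebra Nb)" and ne: "space mu \<noteq> {}"
    and B: "B \<in> sets Nb" and D: "D \<in> sets mu"
  shows "emeasure (joint_prior K mu Nb) (B \<times> D) = (\<integral>\<^sup>+a. indicator D a * emeasure (K a) B \<partial>mu)"
  using B D sets.sets_into_space[OF B]
  by (auto simp: emeasure_joint_prior[OF K ne] Int_absorb1 split: split_indicator
      intro!: nn_integral_cong arg_cong2[where f=emeasure])

lemma emeasure_joint_prior_space_times_le:
  assumes K: "K \<in> measurable mu (subprob_algebra Nb)" and ne: "space mu \<noteq> {}" and D: "D \<in> sets mu"
  shows "emeasure (joint_prior K mu Nb) (space Nb \<times> D) \<le> emeasure mu D"
proof -
  have "emeasure (joint_prior K mu Nb) (space Nb \<times> D) = (\<integral>\<^sup>+a. indicator D a * emeasure (K a) (space Nb) \<partial>mu)"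
    using D by (rule emeasure_joint_prior_times[OF K ne sets.top])
  also have "\<dots> \<le> (\<integral>\<^sup>+a. indicator D a \<partial>mu)"
  proof (rule nn_integral_mono)
    fix a assume "a \<in> space mu"
    then have "emeasure (K a) (space Nb) \<le> 1"
      using subprob_space.subprob_emeasure_le_1[OF subprob_space_kernel[OF K]] by blast
    then show "indicator D a * emeasure (K a) (space Nb) \<le> indicator D a"
      by (simp add: indicator_def)
  qed
  also have "\<dots> = emeasure mu D"
    using D by (rule nn_integral_indicator)
  finally show ?thesis .
qed

lemma joint_post_eq_bind:
  assumes K: "K \<in> measurable mu (subprob_algebra Na)" and ne: "space mu \<noteq> {}"
  shows "joint_post K mu Na = mu \<bind> (\<lambda>x. distr (K x) (mu \<Otimes>\<^sub>M Na) (Pair x))"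
  unfolding joint_post_def space_pair_measure[symmetric]
  using sets_kernel[OF K]
  by (intro measure_of_eq_bind[OF measurable_distr_Pair_right[OF K] ne])
     (simp add: emeasure_distr_Pair_right cong: nn_integral_cong)

lemma emeasure_joint_post:
  assumes K: "K \<in> measurable mu (subprob_algebra Na)" and ne: "space mu \<noteq> {}"
    and S: "S \<in> sets (mu \<Otimes>\<^sub>M Na)"
  shows "emeasure (joint_post K mu Na) S = (\<integral>\<^sup>+x. emeasure (K x) {a \<in> space Na. (x, a) \<in> S} \<partial>mu)"
  using S sets_kernel[OF K]
  by (simp add: joint_post_eq_bind[OF K ne] emeasure_bind[OF ne measurable_distr_Pair_right[OF K]]
      emeasure_distr_Pair_right cong: nn_integral_cong)

lemma joint_post_distr:
  assumes K: "K \<in> measurable mu (subprob_algebra T)" and g: "g \<in> measurable T N"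
    and ne: "space mu \<noteq> {}"
  shows "joint_post (\<lambda>x. distr (K x) N g) mu N
    = distr (joint_post K mu T) (mu \<Otimes>\<^sub>M N) (\<lambda>(x, \<theta>). (x, g \<theta>))"
proof (rule measure_eqI)
  show "sets (joint_post (\<lambda>x. distr (K x) N g) mu N) = sets (distr (joint_post K mu T) (mu \<Otimes>\<^sub>M N) (\<lambda>(x, \<theta>). (x, g \<theta>)))"
    by (simp add: sets_joint_post)
  fix S assume "S \<in> sets (joint_post (\<lambda>x. distr (K x) N g) mu N)"
  then have S: "S \<in> sets (mu \<Otimes>\<^sub>M N)" by (simp add: sets_joint_post)
  have K_g: "(\<lambda>x. distr (K x) N g) \<in> measurable mu (subprob_algebra N)"
    by (rule measurable_compose[OF K measurable_distr[OF g]])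
  have g_S: "(\<lambda>(x, \<theta>). (x, g \<theta>)) \<in> measurable (joint_post K mu T) (mu \<Otimes>\<^sub>M N)"
    unfolding measurable_cong_sets[OF sets_joint_post refl] using g by measurable
  have "emeasure (distr (K x) N g) {a \<in> space N. (x, a) \<in> S}
      = emeasure (K x) {\<theta> \<in> space T. (x, g \<theta>) \<in> S}" if x: "x \<in> space mu" for x
  proof -
    have sets_Kx: "sets (K x) = sets T" using sets_kernel[OF K x] .
    have "g \<in> measurable (K x) N"
      using g unfolding measurable_cong_sets[OF sets_Kx refl] .
    moreover have "{a \<in> space N. (x, a) \<in> S} \<in> sets N"
      using sets.Int[OF sets_Pair1[OF S, of x] sets.top] by (simp add: vimage_def Int_def conj_commute)
    ultimately show ?thesis
      using sets_eq_imp_space_eq[OF sets_Kx] measurable_space[OF g]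
      by (auto simp: emeasure_distr intro!: arg_cong2[where f=emeasure])
  qed
  moreover have "(\<lambda>(x, \<theta>). (x, g \<theta>)) -` S \<inter> space (joint_post K mu T) \<in> sets (mu \<Otimes>\<^sub>M T)"
    using measurable_sets[OF g_S S] by (simp add: sets_joint_post)
  ultimately show "emeasure (joint_post (\<lambda>x. distr (K x) N g) mu N) S
      = emeasure (distr (joint_post K mu T) (mu \<Otimes>\<^sub>M N) (\<lambda>(x, \<theta>). (x, g \<theta>))) S"
    using S
    by (simp add: emeasure_distr[OF g_S S] emeasure_joint_post[OF K_g ne] emeasure_joint_post[OF K ne]
        space_joint_post conj_commute cong: nn_integral_cong conj_cong)
qed

lemma mix_kernel_eq_bind:
  assumes P: "P \<in> measurable (K a) (subprob_algebra borel)" and ne: "space (K a) \<noteq> {}"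
  shows "mix_kernel P K a = K a \<bind> P"
  unfolding mix_kernel_def space_borel[symmetric]
  by (rule measure_of_eq_bind[OF P ne refl])

lemma
  assumes K: "K \<in> measurable mu (subprob_algebra T)" and P: "P \<in> measurable T (subprob_algebra borel)"
  shows measurable_mix_kernel: "mix_kernel P K \<in> measurable mu (subprob_algebra borel)"
    and emeasure_mix_kernel: "a \<in> space mu \<Longrightarrow> B \<in> sets borel \<Longrightarrow>
      emeasure (mix_kernel P K a) B = (\<integral>\<^sup>+\<theta>. emeasure (P \<theta>) B \<partial>K a)"
proof -
  have P_a: "P \<in> measurable (K a) (subprob_algebra borel)" and ne: "space (K a) \<noteq> {}"
    if a: "a \<in> space mu" for a
  proof -
    show "P \<in> measurable (K a) (subprob_algebra borel)"
      using P unfolding measurable_cong_sets[OF sets_kernel[OF K a] refl] .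
    show "space (K a) \<noteq> {}"
      using subprob_space_kernel[OF K a] by (rule subprob_space.subprob_not_empty)
  qed
  then have bind: "mix_kernel P K a = K a \<bind> P" if "a \<in> space mu" for a
    using mix_kernel_eq_bind[where K=K and a=a] that by blast
  have "(\<lambda>a. K a \<bind> P) \<in> measurable mu (subprob_algebra borel)"
    by (rule measurable_bind2[OF K P])
  then show "mix_kernel P K \<in> measurable mu (subprob_algebra borel)"
    by (subst measurable_cong[OF bind]) auto
  show "emeasure (mix_kernel P K a) B = (\<integral>\<^sup>+\<theta>. emeasure (P \<theta>) B \<partial>K a)"
    if "a \<in> space mu" "B \<in> sets borel"
    using that by (simp add: bind emeasure_bind[OF ne P_a])
qed

lemma emeasure_joint_prior_mix_kernel_times:
  assumes K: "K \<in> measurable mu (subprob_algebra T)" and P: "P \<in> measurable T (subprob_algebra borel)"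
    and ne: "space mu \<noteq> {}" and B: "B \<in> sets borel" and C: "C \<in> sets mu"
  shows "emeasure (joint_prior (mix_kernel P K) mu borel) (B \<times> C)
    = (\<integral>\<^sup>+a. indicator C a * (\<integral>\<^sup>+\<theta>. emeasure (P \<theta>) B \<partial>K a) \<partial>mu)"
  using B C
  by (auto simp: emeasure_joint_prior_times[OF measurable_mix_kernel[OF K P] ne]
      emeasure_mix_kernel[OF K P] intro!: nn_integral_cong)

lemma measure_eqI_times:
  fixes M1 M2 :: "('a \<times> 'b) measure" and C :: "nat \<Rightarrow> 'b set"
  assumes sets1: "sets M1 = sets (A \<Otimes>\<^sub>M B)" and sets2: "sets M2 = sets (A \<Otimes>\<^sub>M B)"
    and eq: "\<And>X Y. X \<in> sets A \<Longrightarrow> Y \<in> sets B \<Longrightarrow> emeasure M1 (X \<times> Y) = emeasure M2 (X \<times> Y)"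
    and C: "\<And>i. C i \<in> sets B" "(\<Union>i. C i) = space B" and fin: "\<And>i. emeasure M1 (space A \<times> C i) \<noteq> \<infinity>"
  shows "M1 = M2"
proof (rule measure_eqI_generator_eq[where E="{X \<times> Y | X Y. X \<in> sets A \<and> Y \<in> sets B}"
      and \<Omega>="space A \<times> space B" and A="\<lambda>i. space A \<times> C i"])
  show "Int_stable {X \<times> Y | X Y. X \<in> sets A \<and> Y \<in> sets B}"
    by (rule Int_stable_pair_measure_generator)
  show "{X \<times> Y | X Y. X \<in> sets A \<and> Y \<in> sets B} \<subseteq> Pow (space A \<times> space B)"
    by (auto dest: sets.sets_into_space)
  show "range (\<lambda>i. space A \<times> C i) \<subseteq> {X \<times> Y | X Y. X \<in> sets A \<and> Y \<in> sets B}"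
    using C(1) by blast
  show "(\<Union>i. space A \<times> C i) = space A \<times> space B"
    using C(2) by blast
  show "sets M1 = sigma_sets (space A \<times> space B) {X \<times> Y | X Y. X \<in> sets A \<and> Y \<in> sets B}"
    unfolding sets1 by (rule sets_pair_measure)
  show "sets M2 = sigma_sets (space A \<times> space B) {X \<times> Y | X Y. X \<in> sets A \<and> Y \<in> sets B}"
    unfolding sets2 by (rule sets_pair_measure)
qed (use eq fin in blast)+

lemma joint_prior_mix_kernel_eq_distr:
  fixes P :: "'t \<Rightarrow> 'x::topological_space measure" and A :: "nat \<Rightarrow> 'a set"
  assumes P: "P \<in> measurable nu (subprob_algebra borel)" and K: "K \<in> measurable N (subprob_algebra nu)"
    and t: "t \<in> measurable nu N" and ne: "space N \<noteq> {}"
    and disint: "\<And>B C. B \<in> sets borel \<Longrightarrow> C \<in> sets N \<Longrightarrow>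
      (\<integral>\<^sup>+\<theta>. indicator C (t \<theta>) * emeasure (P \<theta>) B \<partial>nu)
        = (\<integral>\<^sup>+a. indicator C a * (\<integral>\<^sup>+\<theta>. emeasure (P \<theta>) B \<partial>K a) \<partial>distr nu N t)"
    and A: "\<And>i. A i \<in> sets N" "(\<Union>i. A i) = space N"
    and A_fin: "\<And>i. emeasure nu (t -` A i \<inter> space nu) \<noteq> \<infinity>"
  shows "joint_prior (mix_kernel P K) (distr nu N t) borel
    = distr (joint_prior P nu borel) (borel \<Otimes>\<^sub>M N) (\<lambda>(x, \<theta>). (x, t \<theta>))"
proof (rule measure_eqI_times[where C=A, OF sets_joint_prior])
  have K_s: "K \<in> measurable (distr nu N t) (subprob_algebra nu)"
    using K by (simp cong: measurable_cong_sets)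
  have ne_nu: "space nu \<noteq> {}"
  proof -
    obtain a where a: "a \<in> space N" using ne by blast
    show ?thesis
      using subprob_space.subprob_not_empty[OF subprob_space_kernel[OF K a]]
        sets_eq_imp_space_eq[OF sets_kernel[OF K a]] by simp
  qed
  have t_joint: "(\<lambda>(x, \<theta>). (x, t \<theta>)) \<in> measurable (joint_prior P nu borel) (borel \<Otimes>\<^sub>M N)"
    unfolding measurable_cong_sets[OF sets_joint_prior refl] using t by measurable
  show "sets (distr (joint_prior P nu borel) (borel \<Otimes>\<^sub>M N) (\<lambda>(x, \<theta>). (x, t \<theta>))) = sets (borel \<Otimes>\<^sub>M distr nu N t)"
    by (simp cong: sets_pair_measure_cong)
  show "A i \<in> sets (distr nu N t)" for i
    using A(1) by simp
  show "(\<Union>i. A i) = space (distr nu N t)"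
    using A(2) by simp
  show "emeasure (joint_prior (mix_kernel P K) (distr nu N t) borel) (space borel \<times> A i) \<noteq> \<infinity>" for i
  proof -
    have "emeasure (joint_prior (mix_kernel P K) (distr nu N t) borel) (space borel \<times> A i)
        \<le> emeasure (distr nu N t) (A i)"
      using A ne
      by (intro emeasure_joint_prior_space_times_le measurable_mix_kernel[OF K_s P]) simp_all
    also have "\<dots> = emeasure nu (t -` A i \<inter> space nu)"
      by (rule emeasure_distr[OF t A(1)])
    finally show ?thesis
      using A_fin[of i] by (auto simp: top_unique)
  qed
  fix B :: "'x set" and C assume B: "B \<in> sets borel" and "C \<in> sets (distr nu N t)"
  then have C: "C \<in> sets N" by simp
  have "(\<lambda>(x, \<theta>). (x, t \<theta>)) -` (B \<times> C) \<inter> space (joint_prior P nu borel) = B \<times> (t -` C \<inter> space nu)"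
    by (auto simp: space_joint_prior)
  then show "emeasure (joint_prior (mix_kernel P K) (distr nu N t) borel) (B \<times> C)
      = emeasure (distr (joint_prior P nu borel) (borel \<Otimes>\<^sub>M N) (\<lambda>(x, \<theta>). (x, t \<theta>))) (B \<times> C)"
    using B C measurable_sets[OF t C] ne
    by (simp add: emeasure_joint_prior_mix_kernel_times[OF K_s P] emeasure_distr[OF t_joint]
        emeasure_joint_prior_times[OF P ne_nu] disint[symmetric])
       (auto intro!: nn_integral_cong simp: indicator_def)
qed

theorem theorem3p2:
  fixes P :: "'t::polish_space \<Rightarrow> 'x::polish_space measure"
    and nu :: "'t measure"
    and Q :: "'x \<Rightarrow> 't measure"
    and t :: "'t \<Rightarrow> real"
    and \<pi> :: "real \<Rightarrow> 't measure"
  assumes P_kernel: "P \<in> measurable borel (prob_algebra borel)"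
    and nu_sets: "sets nu = sets borel"
    and nu_sf: "sigma_finite_measure nu"
    and M_sf: "sigma_finite_measure (marginal P nu)"
    and Q_kernel: "Q \<in> measurable borel (prob_algebra borel)"
    and Q_post: "joint_prior P nu borel = joint_post Q (marginal P nu) borel"
    and t_meas: "t \<in> borel_measurable borel"
    and t_nonneg: "\<And>\<theta>. 0 \<le> t \<theta>"
    and partition: "\<exists>A :: nat \<Rightarrow> real set. disjoint_family A \<and> (\<forall>i. A i \<in> sets borel)
                     \<and> (\<Union>i. A i) = {0..}
                     \<and> (\<forall>i. 0 < emeasure nu (t -` A i \<inter> space nu)
                           \<and> emeasure nu (t -` A i \<inter> space nu) < \<infinity>)"
    and pi_kernel: "\<pi> \<in> measurable halfline (prob_algebra borel)"
    and disint: "\<And>f1 f2. f1 \<in> borel_measurable borel \<Longrightarrow> f2 \<in> borel_measurable halfline \<Longrightarrow>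
        (\<integral>\<^sup>+ \<theta>. f2 (t \<theta>) * f1 \<theta> \<partial>nu)
          = (\<integral>\<^sup>+ a. f2 a * (\<integral>\<^sup>+ \<theta>. f1 \<theta> \<partial>(\<pi> a)) \<partial>(distr nu halfline t))"
  shows "joint_prior (mix_kernel P \<pi>) (distr nu halfline t) borel
           = joint_post (\<lambda>x. distr (Q x) halfline t) (marginal P nu) halfline"
proof -
  obtain A :: "nat \<Rightarrow> real set" where A_sets: "\<And>i. A i \<in> sets borel" and A_Un: "(\<Union>i. A i) = {0..}"
    and A_fin: "\<And>i. emeasure nu (t -` A i \<inter> space nu) < \<infinity>"
    using partition by blast
  have t_halfline: "t \<in> measurable borel halfline"
    using t_meas t_nonneg by (rule measurable_halfline)
  have P_nu: "P \<in> measurable nu (subprob_algebra borel)"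
    using measurable_prob_algebraD[OF P_kernel] nu_sets by (simp cong: measurable_cong_sets)
  have \<pi>_nu: "\<pi> \<in> measurable halfline (subprob_algebra nu)"
    using measurable_prob_algebraD[OF pi_kernel] by (simp add: subprob_algebra_cong[OF nu_sets])
  have Q_M: "Q \<in> measurable (marginal P nu) (subprob_algebra borel)"
    using measurable_prob_algebraD[OF Q_kernel] by (simp add: sets_marginal cong: measurable_cong_sets)
  have "joint_prior (mix_kernel P \<pi>) (distr nu halfline t) borel
      = distr (joint_prior P nu borel) (borel \<Otimes>\<^sub>M halfline) (\<lambda>(x, \<theta>). (x, t \<theta>))"
  proof (rule joint_prior_mix_kernel_eq_distr[OF P_nu \<pi>_nu])
    show "t \<in> measurable nu halfline"
      using t_halfline nu_sets by (simp cong: measurable_cong_sets)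
    fix B :: "'x set" and C assume B: "B \<in> sets borel" and C: "C \<in> sets halfline"
    show "(\<integral>\<^sup>+\<theta>. indicator C (t \<theta>) * emeasure (P \<theta>) B \<partial>nu)
        = (\<integral>\<^sup>+a. indicator C a * (\<integral>\<^sup>+\<theta>. emeasure (P \<theta>) B \<partial>\<pi> a) \<partial>distr nu halfline t)"
      using measurable_compose[OF measurable_prob_algebraD[OF P_kernel] measurable_emeasure_subprob_algebra[OF B]]
        borel_measurable_indicator[OF C] by (rule disint)
  qed (use A_sets A_Un A_fin space_halfline in \<open>auto simp: sets_halfline_iff less_top[symmetric]\<close>)
  also have "\<dots> = distr (joint_post Q (marginal P nu) borel) (marginal P nu \<Otimes>\<^sub>M halfline) (\<lambda>(x, \<theta>). (x, t \<theta>))"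
    using Q_post by (auto simp: sets_marginal intro!: distr_cong sets_pair_measure_cong)
  also have "\<dots> = joint_post (\<lambda>x. distr (Q x) halfline t) (marginal P nu) halfline"
    using sets_eq_imp_space_eq[OF sets_marginal[of P nu]]
    by (intro joint_post_distr[OF Q_M t_halfline, symmetric]) simp
  finally show ?thesis .
qed

end
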